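(* Let $n\ge1$ and let $\{\mathcal{I},\mathcal{J}\}=\{\mathcal{N},\mathcal{M}\}$. If $\mathrm{cov}_t(\mathcal{I})\ge\mathrm{cof}(\mathcal{I})$, then there exists a linear subspace $H$ of $\mathbb{R}^n$, considered as a vector space over $\mathbb{Q}$, such that $H\in\mathcal{J}\setminus\mathcal{I}$.
   Context: $\mathcal{N}$ is the $\sigma$-ideal of Lebesgue null subsets of $\mathbb{R}^n$, and $\mathcal{M}$ is the $\sigma$-ideal of meager subsets of $\mathbb{R}^n$. For $A,B\subseteq\mathbb{R}^n$ put $A+B=\{a+b:a\in A,b\in B\}$. $\mathrm{cof}(\mathcal{I})=\min\{|\mathcal{F}|:\mathcal{F}\subseteq\mathcal{I},\ \forall A\in\mathcal{I}\ \exists B\in\mathcal{F}\ A\subseteq B\}$. $\mathrm{cov}_t(\mathcal{I})=\min\{|A|:A\subseteq\mathbb{R}^n,\ \exists B\in\mathcal{I}\ (A+B=\mathbb{R}^n)\}$ (the transitive covering number). *)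

theory Defs
  imports "HOL-Analysis.Analysis"
begin

definition msum :: "'a::plus set \<Rightarrow> 'a set \<Rightarrow> 'a set" where
  "msum A B = {a + b | a b. a \<in> A \<and> b \<in> B}"

definition null_ideal :: "('a::euclidean_space) set set" where
  "null_ideal = null_sets lebesgue"

definition nowhere_dense :: "'a::topological_space set \<Rightarrow> bool" where
  "nowhere_dense S \<longleftrightarrow> interior (closure S) = {}"

definition meager :: "'a::topological_space set \<Rightarrow> bool" where
  "meager A \<longleftrightarrow> (\<exists>F. countable F \<and> (\<forall>S\<in>F. nowhere_dense S) \<and> A \<subseteq> \<Union>F)"

definition meager_ideal :: "('a::euclidean_space) set set" where
  "meager_ideal = {A. meager A}"

(* F witnesses cof(I): F \<subseteq> I and every member of I is covered by a member of F *)
definition cofinal_family :: "'a set set \<Rightarrow> 'a set set \<Rightarrow> bool" where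
  "cofinal_family I F \<longleftrightarrow> F \<subseteq> I \<and> (\<forall>A\<in>I. \<exists>B\<in>F. A \<subseteq> B)"

(* A witnesses cov_t(I): A + B = whole space for some B in I *)
definition transitive_cover :: "'a::plus set set \<Rightarrow> 'a set \<Rightarrow> bool" where
  "transitive_cover I A \<longleftrightarrow> (\<exists>B\<in>I. msum A B = UNIV)"

(* cov_t(I) \<ge> cof(I).  Since cardinals are well-ordered, this holds iff every witness A
   for cov_t(I) has |A| \<ge> cof(I), i.e. iff for every such A there is a cofinal family F
   with |F| \<le> |A|. *)
definition cof_le_cov_t :: "'a::plus set set \<Rightarrow> bool" where
  "cof_le_cov_t I \<longleftrightarrow>
     (\<forall>A. transitive_cover I A \<longrightarrow> (\<exists>F. cofinal_family I F \<and> (card_of F, card_of A) \<in> ordLeq))"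

definition rat_subspace :: "'a::real_vector set \<Rightarrow> bool" where
  "rat_subspace H \<longleftrightarrow> 0 \<in> H \<and> (\<forall>x\<in>H. \<forall>y\<in>H. x + y \<in> H)
      \<and> (\<forall>q\<in>\<rat>. \<forall>x\<in>H. q *\<^sub>R x \<in> H)"

end

theory Submission
  imports Defs
begin

(* Take a cofinal family F of I of minimal size cof(I), well-ordered by the initial ordinal of
   |F|, and a set Z in I invariant under nonzero rational scaling whose complement together with 0
   lies in J (a null comeager set, or its complement, saturated under rational scaling). Choose
   recursively x_A outside span_Q {x_B : B < A} + (Z \<union> A). This is possible: the span has
   fewer than cof(I) elements, since cof(I) is uncountable, and cof(I) \<le> cov_t(I). The span H of
   all x_A lies in no A \<in> F, so H \<notin> I. A nonzero vector of H \<inter> Z would have a last generator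
   x_A with nonzero coefficient, putting x_A into span_Q {x_B : B < A} + Z; hence H \<inter> Z = {0}
   and H \<in> J. *)

unbundle cardinal_syntax

definition rat_scale :: "rat \<Rightarrow> 'a::real_vector \<Rightarrow> 'a" where
  "rat_scale q x = real_of_rat q *\<^sub>R x"

interpretation Q: vector_space "rat_scale :: rat \<Rightarrow> 'a::real_vector \<Rightarrow> 'a"
  by unfold_locales (auto simp: rat_scale_def scaleR_add_right scaleR_add_left of_rat_add of_rat_mult)

lemma rat_subspace_Q_span: "rat_subspace (Q.span X)"
  unfolding rat_subspace_def
proof (intro conjI ballI)
  show "q *\<^sub>R x \<in> Q.span X" if "q \<in> \<rat>" "x \<in> Q.span X" for q x
    using that by (metis Rats_cases rat_scale_def Q.span_scale)
qed (auto intro: Q.span_zero Q.span_add)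

lemma Q_span_finite_support:
  assumes "v \<in> Q.span X"
  obtains T where "finite T" "T \<subseteq> X" "v \<in> Q.span T"
proof -
  obtain T c where "finite T" "T \<subseteq> X" "v = (\<Sum>a\<in>T. rat_scale (c a) a)"
    using assms unfolding Q.span_explicit by blast
  moreover have "(\<Sum>a\<in>T. rat_scale (c a) a) \<in> Q.span T"
    by (intro Q.span_sum Q.span_scale Q.span_base)
  ultimately show thesis using that by blast
qed

fun rat_combinations :: "'a::real_vector set \<Rightarrow> nat \<Rightarrow> 'a set" where
  "rat_combinations X 0 = {0}"
| "rat_combinations X (Suc k) = (\<Union>x\<in>X. \<Union>q. (\<lambda>h. rat_scale q x + h) ` rat_combinations X k)"

lemma Q_span_subset_rat_combinations: "Q.span X \<subseteq> (\<Union>k. rat_combinations X k)"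
proof
  fix v assume "v \<in> Q.span X"
  then show "v \<in> (\<Union>k. rat_combinations X k)"
  proof (induction rule: Q.span_induct_alt)
    case base
    show ?case using rat_combinations.simps(1) by blast
  next
    case (step q x h)
    then obtain k where "h \<in> rat_combinations X k" by blast
    then have "rat_scale q x + h \<in> rat_combinations X (Suc k)" using step.hyps(1) by auto
    then show ?case by blast
  qed
qed

lemma countable_card_of_ordLeq_infinite:
  assumes "countable A" "infinite B"
  shows "|A| \<le>o |B|"
proof -
  obtain f :: "_ \<Rightarrow> nat" where "inj_on f A" using assms(1) by (auto simp: countable_def)
  then have "|A| \<le>o |UNIV :: nat set|" using card_of_ordLeq by blast
  then show ?thesis using assms(2) infinite_iff_card_of_nat ordLeq_transitive by blast
qed

lemma card_of_rat_combinations_ordLeq: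
  assumes "infinite B" "|X| \<le>o |B|"
  shows "|rat_combinations X k| \<le>o |B|"
proof (induction k)
  case 0
  show ?case using assms(1) countable_card_of_ordLeq_infinite[of "{0}"] by simp
next
  case (Suc k)
  have rat: "|UNIV :: rat set| \<le>o |B|"
    using assms(1) countable_card_of_ordLeq_infinite countableI_type by blast
  have each: "|\<Union>q. (\<lambda>h. rat_scale q x + h) ` rat_combinations X k| \<le>o |B|" for x
    by (rule card_of_UNION_ordLeq_infinite[OF assms(1) rat])
      (simp add: ordLeq_transitive[OF card_of_image Suc.IH])
  show ?case
    unfolding rat_combinations.simps by (rule card_of_UNION_ordLeq_infinite[OF assms]) (simp add: each)
qed

lemma card_of_Q_span_ordLeq:
  assumes "infinite B" "|X| \<le>o |B|"
  shows "|Q.span X| \<le>o |B|"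
proof -
  have "|\<Union>k. rat_combinations X k| \<le>o |B|"
    using card_of_UNION_ordLeq_infinite[OF assms(1) countable_card_of_ordLeq_infinite[OF _ assms(1)],
        of UNIV "rat_combinations X"]
      card_of_rat_combinations_ordLeq[OF assms] by simp
  then show ?thesis
    using card_of_mono1[OF Q_span_subset_rat_combinations] ordLeq_transitive by blast
qed

lemma card_of_Q_span_ordLess:
  assumes "uncountable F" "|Y| <o |F|"
  shows "|Q.span Y| <o |F|"
proof -
  have "\<not> |F| \<le>o |UNIV :: nat set|"
    using assms(1) card_of_ordLeq[of F "UNIV :: nat set"] unfolding countable_def by auto
  then have nat_less: "|UNIV :: nat set| <o |F|"
    using not_ordLeq_iff_ordLess[OF card_of_Well_order card_of_Well_order] by blast
  let ?B = "(UNIV :: nat set) <+> Y"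
  have "infinite ?B" by (rule infinite_iff_card_of_nat[THEN iffD2, OF card_of_Plus1])
  moreover have "|Y| \<le>o |?B|" by (rule card_of_Plus2)
  ultimately have "|Q.span Y| \<le>o |?B|" by (rule card_of_Q_span_ordLeq)
  moreover have "|?B| <o |F|"
    using assms by (intro card_of_Plus_ordLess_infinite nat_less) (auto dest: countable_finite)
  ultimately show ?thesis by (rule ordLeq_ordLess_trans)
qed

lemma Linear_order_finite_has_max:
  assumes "Linear_order r" "finite T" "T \<noteq> {}" "T \<subseteq> Field r"
  obtains m where "m \<in> T" "T \<subseteq> under r m"
proof -
  have refl: "Refl r" and trans: "trans r" and total: "Total r"
    using assms(1) unfolding linear_order_on_def partial_order_on_def preorder_on_def by blast+
  have "\<exists>m\<in>T. T \<subseteq> under r m"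
    using assms(2-4)
  proof (induction T rule: finite_ne_induct)
    case (singleton a)
    then show ?case using refl by (auto simp: under_def refl_on_def)
  next
    case (insert a T)
    then obtain m where m: "m \<in> T" "T \<subseteq> under r m" by auto
    show ?case
    proof (cases "(a, m) \<in> r")
      case True
      then show ?thesis using m by (auto simp: under_def)
    next
      case False
      then have "(m, a) \<in> r"
        using total insert.prems m refl by (simp add: total_on_def refl_on_def) (metis subsetD)
      then have "T \<subseteq> under r a" using m trans by (auto simp: under_def trans_def)
      then show ?thesis using insert.prems refl by (auto simp: under_def refl_on_def)
    qed
  qed
  then show thesis using that by blast
qed

lemma Q_span_image_under:
  assumes "Linear_order r" "A \<subseteq> Field r" "v \<in> Q.span (f ` A)" "v \<noteq> 0"
  obtains m where "m \<in> A" "v \<in> Q.span (f ` under r m)"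
proof -
  obtain T where T: "finite T" "T \<subseteq> f ` A" "v \<in> Q.span T"
    using Q_span_finite_support[OF assms(3)] .
  then obtain T' where T': "T' \<subseteq> A" "finite T'" "T = f ` T'"
    by (meson finite_subset_image)
  have "T' \<noteq> {}" using T T' assms(4) by auto
  then obtain m where "m \<in> T'" "T' \<subseteq> under r m"
    using Linear_order_finite_has_max[OF assms(1) \<open>finite T'\<close>] T' assms(2) by blast
  moreover have "Q.span T \<subseteq> Q.span (f ` under r m)"
    using \<open>T' \<subseteq> under r m\<close> T'(3) by (intro Q.span_mono) blast
  ultimately show thesis using that T T' by blast
qed

lemma wf_recursive_choice:
  assumes "wf R"
    and ex: "\<And>\<alpha> x. \<alpha> \<in> A \<Longrightarrow> \<exists>y. P x \<alpha> y"
    and cong: "\<And>\<alpha> x x'. (\<And>\<beta>. (\<beta>, \<alpha>) \<in> R \<Longrightarrow> x \<beta> = x' \<beta>) \<Longrightarrow> P x \<alpha> = P x' \<alpha>"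
  obtains x where "\<And>\<alpha>. \<alpha> \<in> A \<Longrightarrow> P x \<alpha> (x \<alpha>)"
proof
  define x where "x = wfrec R (\<lambda>x \<alpha>. SOME y. P x \<alpha> y)"
  fix \<alpha> assume "\<alpha> \<in> A"
  have "x \<alpha> = (SOME y. P (cut x R \<alpha>) \<alpha> y)"
    unfolding x_def by (subst wfrec[OF assms(1)]) simp
  also have "P (cut x R \<alpha>) \<alpha> = P x \<alpha>"
    by (rule cong) (simp add: cut_apply)
  finally show "P x \<alpha> (x \<alpha>)"
    using someI_ex[OF ex[OF \<open>\<alpha> \<in> A\<close>]] by simp
qed

lemma exists_minimal_cofinal_family:
  obtains F where "cofinal_family I F" "\<And>F'. cofinal_family I F' \<Longrightarrow> |F| \<le>o |F'|"
proof -
  let ?R = "{|F| | F. cofinal_family I F}"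
  have "cofinal_family I I" by (auto simp: cofinal_family_def)
  then have "?R \<noteq> {}" by blast
  then have "\<exists>r\<in>?R. \<forall>r'\<in>?R. r \<le>o r'"
    by (intro exists_minim_Card_order) (auto intro: card_of_Card_order)
  then show thesis using that by blast
qed

lemma msum_mono: "A \<subseteq> A' \<Longrightarrow> B \<subseteq> B' \<Longrightarrow> msum A B \<subseteq> msum A' B'"
  unfolding msum_def by blast

lemma msum_not_UNIV_if_card_of_less_cof:
  assumes "cof_le_cov_t I"
    and "\<And>F'. cofinal_family I F' \<Longrightarrow> |F| \<le>o |F'|"
    and "B \<in> I" "|S| <o |F|"
  shows "msum S B \<noteq> UNIV"
proof
  assume "msum S B = UNIV"
  then have "transitive_cover I S" using assms(3) unfolding transitive_cover_def by blast
  then obtain F' where "cofinal_family I F'" "|F'| \<le>o |S|"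
    using assms(1) unfolding cof_le_cov_t_def by blast
  then have "|F| <o |F|" using assms(2,4) ordLeq_transitive ordLeq_ordLess_trans by blast
  then show False using ordLess_irreflexive by blast
qed

lemma Q_span_Int_subset_zero:
  assumes "Well_order r"
    and scale: "\<And>q z. q \<noteq> 0 \<Longrightarrow> z \<in> Z \<Longrightarrow> rat_scale q z \<in> Z"
    and avoid: "\<And>\<alpha>. \<alpha> \<in> Field r \<Longrightarrow> x \<alpha> \<notin> msum (Q.span (x ` underS r \<alpha>)) Z"
  shows "Q.span (x ` Field r) \<inter> Z \<subseteq> {0}"
proof -
  have lin: "Linear_order r" using assms(1) by (simp add: well_order_on_def)
  have under: "Q.span (x ` under r \<beta>) \<inter> Z \<subseteq> {0}" if "\<beta> \<in> Field r" for \<beta>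
    using that
  proof (induction \<beta> rule: wf_induct[OF wo_rel.WF[OF wo_rel.intro[OF assms(1)]]])
    case (1 \<beta>)
    show ?case
    proof (rule subsetI, rule ccontr)
      fix v assume v: "v \<in> Q.span (x ` under r \<beta>) \<inter> Z" and "v \<notin> {0}"
      let ?S = "Q.span (x ` underS r \<beta>)"
      have "x ` under r \<beta> = insert (x \<beta>) (x ` underS r \<beta>)"
        using Refl_under_underS[OF _ 1(2)] lin by (auto simp: linear_order_on_def
            partial_order_on_def preorder_on_def)
      then obtain k where k: "v - rat_scale k (x \<beta>) \<in> ?S"
        using v Q.span_breakdown_eq by (metis IntD1)
      show False
      proof (cases "k = 0")
        case True
        then have "v \<in> ?S" using k by simp
        moreover have "underS r \<beta> \<subseteq> Field r" using underS_Field by fast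
        ultimately obtain m where "m \<in> underS r \<beta>" "v \<in> Q.span (x ` under r m)"
          using Q_span_image_under[OF lin] \<open>v \<notin> {0}\<close> by (metis singletonI)
        then show False
          using "1.IH" v \<open>v \<notin> {0}\<close> by (auto simp: underS_def intro: FieldI1)
      next
        case False
        have "x \<beta> = rat_scale (- 1 / k) (v - rat_scale k (x \<beta>)) + rat_scale (1 / k) v"
          using False by (simp add: rat_scale_def algebra_simps of_rat_divide of_rat_minus)
        moreover have "rat_scale (- 1 / k) (v - rat_scale k (x \<beta>)) \<in> ?S"
          using k by (rule Q.span_scale)
        moreover have "rat_scale (1 / k) v \<in> Z" using scale False v by simp
        ultimately have "x \<beta> \<in> msum ?S Z" unfolding msum_def by blast
        then show False using avoid 1(2) by blast
      qed
    qed
  qed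
  show ?thesis
  proof (rule subsetI, rule ccontr)
    fix v assume v: "v \<in> Q.span (x ` Field r) \<inter> Z" "v \<notin> {0}"
    then obtain m where "m \<in> Field r" "v \<in> Q.span (x ` under r m)"
      using Q_span_image_under[OF lin subset_refl] by (metis IntD1 singletonI)
    then show False using under v by blast
  qed
qed

lemma exists_rat_subspace_avoiding:
  fixes I :: "'a::real_vector set set"
  assumes Un: "\<And>A B. A \<in> I \<Longrightarrow> B \<in> I \<Longrightarrow> A \<union> B \<in> I"
    and not_cofinal: "\<And>F. countable F \<Longrightarrow> \<not> cofinal_family I F"
    and "Z \<in> I"
    and scale: "\<And>q z. q \<noteq> 0 \<Longrightarrow> z \<in> Z \<Longrightarrow> rat_scale q z \<in> Z"
    and "cof_le_cov_t I"
  shows "\<exists>H. rat_subspace H \<and> H \<notin> I \<and> H \<inter> Z \<subseteq> {0}"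
proof -
  obtain F where cofinal: "cofinal_family I F"
    and min: "\<And>F'. cofinal_family I F' \<Longrightarrow> |F| \<le>o |F'|"
    using exists_minimal_cofinal_family[of I] by blast
  have "uncountable F" using not_cofinal cofinal by blast
  let ?r = "|F|"
  have wo: "Well_order ?r" by (rule card_of_Well_order)
  have field: "Field ?r = F" by (rule Field_card_of)
  let ?avoid = "\<lambda>x \<alpha> y. y \<notin> msum (Q.span (x ` underS ?r \<alpha>)) (Z \<union> \<alpha>)"
  obtain x where x: "\<And>\<alpha>. \<alpha> \<in> F \<Longrightarrow> ?avoid x \<alpha> (x \<alpha>)"
  proof (rule wf_recursive_choice[OF wo_rel.WF[OF wo_rel.intro[OF wo]], where P = ?avoid])
    show "\<exists>y. ?avoid x \<alpha> y" if "\<alpha> \<in> F" for \<alpha> x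
    proof -
      have "|underS ?r \<alpha>| <o |F|"
        using card_of_underS[OF card_of_Card_order[of F], of \<alpha>] field that by simp
      then have "|x ` underS ?r \<alpha>| <o |F|"
        by (rule ordLeq_ordLess_trans[OF card_of_image])
      then have "|Q.span (x ` underS ?r \<alpha>)| <o |F|"
        by (rule card_of_Q_span_ordLess[OF \<open>uncountable F\<close>])
      moreover have "Z \<union> \<alpha> \<in> I"
        using cofinal that unfolding cofinal_family_def by (intro Un assms(3)) blast
      ultimately have "msum (Q.span (x ` underS ?r \<alpha>)) (Z \<union> \<alpha>) \<noteq> UNIV"
        by (intro msum_not_UNIV_if_card_of_less_cof[OF assms(5) min])
      then show ?thesis by auto
    qed
    show "?avoid x \<alpha> = ?avoid x' \<alpha>" if "\<And>\<beta>. (\<beta>, \<alpha>) \<in> ?r - Id \<Longrightarrow> x \<beta> = x' \<beta>" for \<alpha> x x'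
    proof -
      have "x ` underS ?r \<alpha> = x' ` underS ?r \<alpha>"
        by (rule image_cong[OF refl]) (simp add: underS_def that)
      then show ?thesis by simp
    qed
  qed blast
  define H where "H = Q.span (x ` F)"
  have "rat_subspace H" unfolding H_def by (rule rat_subspace_Q_span)
  moreover have "H \<notin> I"
  proof
    assume "H \<in> I"
    then obtain \<alpha> where "\<alpha> \<in> F" "H \<subseteq> \<alpha>" using cofinal unfolding cofinal_family_def by blast
    moreover have "x \<alpha> \<in> H" unfolding H_def using \<open>\<alpha> \<in> F\<close> by (intro Q.span_base imageI)
    ultimately have "x \<alpha> \<in> Z \<union> \<alpha>" by blast
    then have "0 + x \<alpha> \<in> msum (Q.span (x ` underS ?r \<alpha>)) (Z \<union> \<alpha>)"
      unfolding msum_def using Q.span_zero by blast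
    then show False using x[OF \<open>\<alpha> \<in> F\<close>] by simp
  qed
  moreover have "H \<inter> Z \<subseteq> {0}"
  proof -
    have "x \<alpha> \<notin> msum (Q.span (x ` underS ?r \<alpha>)) Z" if "\<alpha> \<in> Field ?r" for \<alpha>
      using x[of \<alpha>] msum_mono[OF order_refl, of Z "Z \<union> \<alpha>"] that field by blast
    then show ?thesis using Q_span_Int_subset_zero[OF wo scale] field unfolding H_def by simp
  qed
  ultimately show ?thesis by blast
qed

lemma null_ideal_iff_negligible: "A \<in> null_ideal \<longleftrightarrow> negligible A"
  by (simp add: null_ideal_def negligible_iff_null_sets)

lemma meager_subset: "meager A \<Longrightarrow> B \<subseteq> A \<Longrightarrow> meager B"
  unfolding meager_def by (meson order_trans)

lemma meager_Union:
  assumes "countable \<A>" "\<And>A. A \<in> \<A> \<Longrightarrow> meager A"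
  shows "meager (\<Union>\<A>)"
proof -
  have ex: "\<forall>A\<in>\<A>. \<exists>\<N>. countable \<N> \<and> (\<forall>S\<in>\<N>. nowhere_dense S) \<and> A \<subseteq> \<Union>\<N>"
    using assms(2) unfolding meager_def by blast
  obtain \<F> where \<F>: "\<forall>A\<in>\<A>. countable (\<F> A) \<and> (\<forall>S\<in>\<F> A. nowhere_dense S) \<and> A \<subseteq> \<Union>(\<F> A)"
    using bchoice[OF ex] by blast
  show ?thesis
    unfolding meager_def
  proof (intro exI[of _ "\<Union>(\<F> ` \<A>)"] conjI)
    show "countable (\<Union>(\<F> ` \<A>))" using assms(1) \<F> by (intro countable_UN) auto
    show "\<forall>S\<in>\<Union>(\<F> ` \<A>). nowhere_dense S" using \<F> by auto
    show "\<Union>\<A> \<subseteq> \<Union>(\<Union>(\<F> ` \<A>))" using \<F> by fastforce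
  qed
qed

lemma meager_singleton: "meager {p :: 'a::{t1_space, perfect_space}}"
  unfolding meager_def nowhere_dense_def by (intro exI[of _ "{{p}}"]) auto

lemma not_meager_UNIV: "\<not> meager (UNIV :: 'a::{real_normed_vector, heine_borel} set)"
proof
  assume "meager (UNIV :: 'a set)"
  then obtain \<F> :: "'a set set" where \<F>: "countable \<F>" "\<forall>S\<in>\<F>. nowhere_dense S" "UNIV \<subseteq> \<Union>\<F>"
    unfolding meager_def by blast
  let ?\<G> = "(\<lambda>S. - closure S) ` \<F>"
  have "UNIV \<subseteq> closure (\<Inter>?\<G>)"
  proof (rule Baire)
    fix T assume "T \<in> ?\<G>"
    then obtain S where "S \<in> \<F>" "T = - closure S" by blast
    then show "openin (top_of_set UNIV) T \<and> UNIV \<subseteq> closure T"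
      using \<F>(2) by (simp add: closure_complement nowhere_dense_def open_Compl)
  qed (use \<F>(1) in simp_all)
  then have "\<Inter>?\<G> \<noteq> {}" by (metis UNIV_not_empty closure_empty subset_empty)
  then obtain p where p: "p \<in> \<Inter>?\<G>" by blast
  have "p \<notin> S" if "S \<in> \<F>" for S
    using p that closure_subset[of S] by blast
  then show False using \<F>(3) by blast
qed

lemma meager_scaleR_image:
  fixes S :: "'a::euclidean_space set"
  assumes "meager S" "c \<noteq> 0"
  shows "meager ((*\<^sub>R) c ` S)"
proof -
  have lin: "linear ((*\<^sub>R) c :: 'a \<Rightarrow> 'a)" by (simp add: linear_scaleR)
  have inj: "inj ((*\<^sub>R) c :: 'a \<Rightarrow> 'a)" using assms(2) by (auto simp: inj_on_def)
  have "nowhere_dense ((*\<^sub>R) c ` N)" if "nowhere_dense N" for N :: "'a set"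
    using that unfolding nowhere_dense_def
    by (simp add: closure_scaleR[symmetric] interior_injective_linear_image[OF lin inj])
  moreover obtain \<F> where "countable \<F>" "\<forall>N\<in>\<F>. nowhere_dense N" "S \<subseteq> \<Union>\<F>"
    using assms(1) unfolding meager_def by blast
  ultimately show ?thesis
    unfolding meager_def
    by (intro exI[of _ "(\<lambda>N. (*\<^sub>R) c ` N) ` \<F>"] conjI) (auto simp flip: image_Union intro: image_mono)
qed

lemma negligible_scaleR_image:
  fixes S :: "'a::euclidean_space set"
  assumes "negligible S"
  shows "negligible ((*\<^sub>R) c ` S)"
  by (rule negligible_differentiable_image_negligible[OF order_refl assms])
    (auto intro!: derivative_intros simp: differentiable_on_def differentiable_def)

lemma countable_not_cofinal_family:
  assumes "\<And>\<A>. countable \<A> \<Longrightarrow> \<A> \<subseteq> I \<Longrightarrow> \<Union>\<A> \<in> I"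
    and "\<And>p. {p} \<in> I" and "UNIV \<notin> I" and "countable F"
  shows "\<not> cofinal_family I F"
proof
  assume cofinal: "cofinal_family I F"
  then have "F \<subseteq> I" unfolding cofinal_family_def by simp
  then have "\<Union>F \<in> I" by (rule assms(1)[OF assms(4)])
  then have "\<Union>F \<noteq> UNIV" using assms(3) by metis
  then obtain p where "p \<notin> \<Union>F" by blast
  moreover obtain B where "B \<in> F" "{p} \<subseteq> B"
    using cofinal assms(2)[of p] unfolding cofinal_family_def by blast
  ultimately show False by blast
qed

lemma exists_negligible_comeager:
  obtains G :: "'a::euclidean_space set" where "negligible G" "meager (- G)"
proof -
  obtain D :: "'a set" where D: "countable D" "\<And>X. open X \<Longrightarrow> X \<noteq> {} \<Longrightarrow> \<exists>d\<in>D. d \<in> X"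
    by (rule countable_dense_setE) blast
  have "negligible (\<Union>d\<in>D. {d})"
    using D(1) by (intro negligible_countable_Union) auto
  then have "negligible D" by simp
  have "\<exists>U. open U \<and> D \<subseteq> U \<and> U - D \<in> lmeasurable \<and> emeasure lebesgue (U - D) < ennreal (1 / Suc m)" for m
  proof -
    have "(0::real) < 1 / Suc m" by simp
    from sets_lebesgue_outer_open[OF negligible_imp_sets[OF \<open>negligible D\<close>] this] show ?thesis
      by metis
  qed
  then obtain U where U: "\<And>m. open (U m)" "\<And>m. D \<subseteq> U m" "\<And>m. U m - D \<in> lmeasurable"
      "\<And>m. emeasure lebesgue (U m - D) < ennreal (1 / Suc m)" by metis
  define G where "G = (\<Inter>m. U m)"
  have "negligible (G - D)"
    unfolding negligible_outer
  proof (intro allI impI)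
    fix e :: real assume "e > 0"
    then obtain m where m: "inverse (real (Suc m)) < e" using reals_Archimedean by blast
    have "ennreal (measure lebesgue (U m - D)) < ennreal (1 / Suc m)"
      using U(4)[of m] emeasure_eq_measure2[OF U(3)[of m]] by simp
    then have "measure lebesgue (U m - D) < 1 / Suc m" by (simp add: ennreal_less_iff)
    then have "measure lebesgue (U m - D) < e" using m by (simp add: divide_inverse)
    moreover have "G - D \<subseteq> U m - D" unfolding G_def by blast
    ultimately show "\<exists>T. G - D \<subseteq> T \<and> T \<in> lmeasurable \<and> measure lebesgue T < e" using U(3) by blast
  qed
  then have "negligible G"
    using \<open>negligible D\<close> negligible_Un[of "G - D" D] negligible_subset[of "(G - D) \<union> D" G] by blast
  moreover have nowhere_dense: "nowhere_dense (- U m)" for m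
  proof -
    have "interior (- U m) = {}"
      using D(2)[OF open_interior] interior_subset[of "- U m"] U(2)[of m] by blast
    then show ?thesis using U(1)[of m] by (simp add: nowhere_dense_def closed_open)
  qed
  then have "meager (- G)"
    unfolding meager_def
  proof (intro exI conjI)
    show "countable (range (\<lambda>m. - U m))" by simp
    show "\<forall>S\<in>range (\<lambda>m. - U m). nowhere_dense S" using nowhere_dense by blast
    show "- G \<subseteq> \<Union> (range (\<lambda>m. - U m))" unfolding G_def by blast
  qed
  ultimately show thesis using that by blast
qed

lemma meager_insert: "meager A \<Longrightarrow> meager (insert (p :: 'a::{t1_space, perfect_space}) A)"
  using meager_Union[of "{{p}, A}"] meager_singleton by auto

lemma null_ideal_countable_Union:
  "countable \<A> \<Longrightarrow> \<A> \<subseteq> null_ideal \<Longrightarrow> \<Union>\<A> \<in> (null_ideal :: 'a::euclidean_space set set)"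
  unfolding null_ideal_iff_negligible by (rule negligible_countable_Union) (auto simp: null_ideal_iff_negligible)

lemma meager_ideal_countable_Union:
  "countable \<A> \<Longrightarrow> \<A> \<subseteq> meager_ideal \<Longrightarrow> \<Union>\<A> \<in> (meager_ideal :: 'a::euclidean_space set set)"
  unfolding meager_ideal_def by (auto intro: meager_Union)

lemma null_ideal_scaleR_image:
  "A \<in> null_ideal \<Longrightarrow> (*\<^sub>R) c ` A \<in> (null_ideal :: 'a::euclidean_space set set)"
  by (simp add: null_ideal_iff_negligible negligible_scaleR_image)

lemma meager_ideal_scaleR_image:
  "A \<in> meager_ideal \<Longrightarrow> c \<noteq> 0 \<Longrightarrow> (*\<^sub>R) c ` A \<in> (meager_ideal :: 'a::euclidean_space set set)"
  by (simp add: meager_ideal_def meager_scaleR_image)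

lemma not_cofinal_family_null_ideal:
  "countable F \<Longrightarrow> \<not> cofinal_family (null_ideal :: 'a::euclidean_space set set) F"
  by (rule countable_not_cofinal_family[OF null_ideal_countable_Union])
    (simp_all add: null_ideal_iff_negligible)

lemma not_cofinal_family_meager_ideal:
  "countable F \<Longrightarrow> \<not> cofinal_family (meager_ideal :: 'a::euclidean_space set set) F"
  by (rule countable_not_cofinal_family[OF meager_ideal_countable_Union])
    (simp_all add: meager_ideal_def meager_singleton not_meager_UNIV)

lemma exists_rat_subspace_outside_ideal:
  fixes I :: "'a::real_vector set set"
  assumes Union: "\<And>\<A>. countable \<A> \<Longrightarrow> \<A> \<subseteq> I \<Longrightarrow> \<Union>\<A> \<in> I"
    and scale: "\<And>A q. A \<in> I \<Longrightarrow> q \<noteq> 0 \<Longrightarrow> (*\<^sub>R) (real_of_rat q) ` A \<in> I"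
    and not_cofinal: "\<And>F. countable F \<Longrightarrow> \<not> cofinal_family I F"
    and "G \<in> I" and "cof_le_cov_t I"
  shows "\<exists>H. rat_subspace H \<and> H \<notin> I \<and> H \<subseteq> insert 0 (- G)"
proof -
  define Z where "Z = (\<Union>q\<in>-{0}. rat_scale q ` G)"
  have Un: "A \<union> B \<in> I" if "A \<in> I" "B \<in> I" for A B
    using Union[of "{A, B}"] that by simp
  have "Z \<in> I"
    unfolding Z_def rat_scale_def[abs_def] using \<open>G \<in> I\<close> by (intro Union) (auto intro: scale)
  have Z_scale: "rat_scale q z \<in> Z" if "q \<noteq> 0" "z \<in> Z" for q z
  proof -
    obtain p g where "p \<noteq> 0" "g \<in> G" "z = rat_scale p g" using \<open>z \<in> Z\<close> unfolding Z_def by blast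
    then have "rat_scale q z = rat_scale (q * p) g" "q * p \<noteq> 0" using \<open>q \<noteq> 0\<close> by simp_all
    then show ?thesis unfolding Z_def using \<open>g \<in> G\<close> by (intro UN_I[of "q * p"]) auto
  qed
  obtain H where H: "rat_subspace H" "H \<notin> I" "H \<inter> Z \<subseteq> {0}"
    using exists_rat_subspace_avoiding[OF Un not_cofinal \<open>Z \<in> I\<close> Z_scale \<open>cof_le_cov_t I\<close>] by blast
  have "G \<subseteq> Z"
  proof
    fix g assume "g \<in> G"
    then have "rat_scale 1 g \<in> rat_scale 1 ` G" by (rule imageI)
    then show "g \<in> Z" unfolding Z_def by (intro UN_I[of 1]) auto
  qed
  with H(3) have "H \<subseteq> insert 0 (- G)" by auto
  with H(1,2) show ?thesis by blast
qed

theorem theorem2p5: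
  fixes I J :: "(real ^ 'n) set set"
  assumes "(I = null_ideal \<and> J = meager_ideal) \<or> (I = meager_ideal \<and> J = null_ideal)"
    and "cof_le_cov_t I"
  shows "\<exists>H :: (real ^ 'n) set. rat_subspace H \<and> H \<in> J \<and> H \<notin> I"
proof -
  obtain G :: "(real ^ 'n) set" where G: "negligible G" "meager (- G)"
    by (rule exists_negligible_comeager)
  from assms(1) show ?thesis
  proof
    assume IJ: "I = null_ideal \<and> J = meager_ideal"
    have "\<exists>H. rat_subspace H \<and> H \<notin> I \<and> H \<subseteq> insert 0 (- G)"
      unfolding IJ[THEN conjunct1]
      by (intro exists_rat_subspace_outside_ideal null_ideal_countable_Union null_ideal_scaleR_image
          not_cofinal_family_null_ideal) (use G assms(2) IJ in \<open>simp_all add: null_ideal_iff_negligible\<close>)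
    then obtain H where "rat_subspace H" "H \<notin> I" "meager H"
      using meager_subset[OF meager_insert[OF G(2)]] by blast
    then show ?thesis using IJ by (auto simp: meager_ideal_def)
  next
    assume IJ: "I = meager_ideal \<and> J = null_ideal"
    have "\<exists>H. rat_subspace H \<and> H \<notin> I \<and> H \<subseteq> insert 0 (- (- G))"
      unfolding IJ[THEN conjunct1]
      by (intro exists_rat_subspace_outside_ideal meager_ideal_countable_Union meager_ideal_scaleR_image
          not_cofinal_family_meager_ideal) (use G assms(2) IJ in \<open>simp_all add: meager_ideal_def\<close>)
    then obtain H where "rat_subspace H" "H \<notin> I" "negligible H"
      using negligible_subset[of "insert 0 G"] G(1) by auto
    then show ?thesis using IJ by (auto simp: null_ideal_iff_negligible)
  qed
qed

end
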